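(* Assume $k = 1$ and let $A$ be any implementable allocation rule. Among all payment rules that implement $A$ and are ex-post individually rational, the winner-pays-bid payment rule minimizes the variance $\mathrm{Var}(R) = \mathbb E[(R - \mathbb E[R])^2]$ of the revenue $R = \sum_i P_i(\bm v)$.
   Context: Setting: $n$ risk-neutral unit-demand bidders and $k$ identical items, $1 \le k < n$. Bidder $i$ has private value $v_i \in \mathcal V_i = [0,\bar v_i]$, drawn independently across bidders from a distribution $F_i$ with density $f_i > 0$ on $\mathcal V_i$; $\bm v = (v_1,\dots,v_n)$, $\mathcal V = \prod_i \mathcal V_i$. An allocation rule is a measurable map $A : \mathcal V \to \{0,1\}^n$ with $\sum_i A_i(\bm v) \le k$. Its interim allocation is $x_i(v_i) = \mathbb E[A_i(\bm v) \mid v_i]$, and $A$ is called implementable if every $x_i$ is non-decreasing. Its interim payment function is $z_i(v_i) = v_i x_i(v_i) - \int_0^{v_i} x_i(u)\,du$. A payment rule is a measurable map $P : \mathcal V \to [0,\infty)^n$ (payments are non-negative). $P$ implements $A$ if $(A,P)$ is Bayesian incentive compatible, i.e. $\mathbb E[v_i A_i(\bm v) - P_i(\bm v) \mid v_i] \ge \mathbb E[v_i A_i(v_i',\bm v_{-i}) - P_i(v_i',\bm v_{-i}) \mid v_i]$ for all $i, v_i, v_i'$, and satisfies revenue equivalence $\mathbb E[P_i(\bm v) \mid v_i] = z_i(v_i)$ for all $i, v_i$. $P$ is ex-post individually rational if $v_i A_i(\bm v) - P_i(\bm v) \ge 0$ for all $i$ and $\bm v$. The winner-pays-bid (WPB)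 payment rule is $P_i^{\mathrm{WPB}}(\bm v) = b_i^{\mathrm{WPB}}(v_i) A_i(\bm v)$ with $b_i^{\mathrm{WPB}}(v_i) = z_i(v_i)/x_i(v_i)$ when $x_i(v_i) > 0$ and $b_i^{\mathrm{WPB}}(v_i) = 0$ otherwise. *)

theory Defs
  imports "HOL-Probability.Probability"
begin

text \<open>Bidders are indexed by i < n; a valuation profile is a function nat => real
 (extensional outside {..<n}, as in the product measure).  Bidder i's prior has
 density f i on [0, vbar i].\<close>

definition valid_prior :: "nat \<Rightarrow> (nat \<Rightarrow> real) \<Rightarrow> (nat \<Rightarrow> real \<Rightarrow> real) \<Rightarrow> bool" where
  "valid_prior n vbar f \<longleftrightarrow> (\<forall>i<n. 0 < vbar i \<and> f i \<in> borel_measurable borel \<and>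
     (\<forall>x\<in>{0..vbar i}. 0 < f i x) \<and>
     (\<integral>\<^sup>+ x. ennreal (indicator {0..vbar i} x * f i x) \<partial>lborel) = 1)"

definition prior :: "(nat \<Rightarrow> real) \<Rightarrow> (nat \<Rightarrow> real \<Rightarrow> real) \<Rightarrow> nat \<Rightarrow> real measure" where
  "prior vbar f i = density lborel (\<lambda>x. ennreal (indicator {0..vbar i} x * f i x))"

definition profile_measure :: "nat \<Rightarrow> (nat \<Rightarrow> real) \<Rightarrow> (nat \<Rightarrow> real \<Rightarrow> real) \<Rightarrow> (nat \<Rightarrow> real) measure" where
  "profile_measure n vbar f = PiM {..<n} (prior vbar f)"

definition types :: "nat \<Rightarrow> (nat \<Rightarrow> real) \<Rightarrow> (nat \<Rightarrow> real) set" where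
  "types n vbar = PiE {..<n} (\<lambda>i. {0..vbar i})"

text \<open>Interim expectation E[g(v) | v_i = vi]: by independence, integrate over the
 other bidders' values.\<close>
definition interim :: "nat \<Rightarrow> (nat \<Rightarrow> real) \<Rightarrow> (nat \<Rightarrow> real \<Rightarrow> real) \<Rightarrow> nat \<Rightarrow>
    ((nat \<Rightarrow> real) \<Rightarrow> real) \<Rightarrow> real \<Rightarrow> real" where
  "interim n vbar f i g vi = (\<integral> w. g (w(i := vi)) \<partial>PiM ({..<n} - {i}) (prior vbar f))"

definition alloc_rule :: "nat \<Rightarrow> nat \<Rightarrow> (nat \<Rightarrow> real) \<Rightarrow> (nat \<Rightarrow> real \<Rightarrow> real) \<Rightarrow>
    ((nat \<Rightarrow> real) \<Rightarrow> nat \<Rightarrow> real) \<Rightarrow> bool" where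
  "alloc_rule n k vbar f A \<longleftrightarrow>
     (\<forall>i<n. (\<lambda>v. A v i) \<in> borel_measurable (profile_measure n vbar f)) \<and>
     (\<forall>v. \<forall>i<n. A v i \<in> {0, 1}) \<and> (\<forall>v. (\<Sum>i<n. A v i) \<le> real k)"

definition interim_alloc :: "nat \<Rightarrow> (nat \<Rightarrow> real) \<Rightarrow> (nat \<Rightarrow> real \<Rightarrow> real) \<Rightarrow>
    ((nat \<Rightarrow> real) \<Rightarrow> nat \<Rightarrow> real) \<Rightarrow> nat \<Rightarrow> real \<Rightarrow> real" where
  "interim_alloc n vbar f A i = interim n vbar f i (\<lambda>v. A v i)"

definition implementable :: "nat \<Rightarrow> (nat \<Rightarrow> real) \<Rightarrow> (nat \<Rightarrow> real \<Rightarrow> real) \<Rightarrow>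
    ((nat \<Rightarrow> real) \<Rightarrow> nat \<Rightarrow> real) \<Rightarrow> bool" where
  "implementable n vbar f A \<longleftrightarrow> (\<forall>i<n. mono_on {0..vbar i} (interim_alloc n vbar f A i))"

definition interim_payment :: "nat \<Rightarrow> (nat \<Rightarrow> real) \<Rightarrow> (nat \<Rightarrow> real \<Rightarrow> real) \<Rightarrow>
    ((nat \<Rightarrow> real) \<Rightarrow> nat \<Rightarrow> real) \<Rightarrow> nat \<Rightarrow> real \<Rightarrow> real" where
  "interim_payment n vbar f A i vi =
     vi * interim_alloc n vbar f A i vi - integral {0..vi} (interim_alloc n vbar f A i)"

definition payment_rule :: "nat \<Rightarrow> (nat \<Rightarrow> real) \<Rightarrow> (nat \<Rightarrow> real \<Rightarrow> real) \<Rightarrow>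
    ((nat \<Rightarrow> real) \<Rightarrow> nat \<Rightarrow> real) \<Rightarrow> bool" where
  "payment_rule n vbar f P \<longleftrightarrow>
     (\<forall>i<n. (\<lambda>v. P v i) \<in> borel_measurable (profile_measure n vbar f)) \<and>
     (\<forall>v\<in>types n vbar. \<forall>i<n. 0 \<le> P v i)"

text \<open>P implements A: Bayesian incentive compatibility plus revenue equivalence.\<close>
definition implements :: "nat \<Rightarrow> (nat \<Rightarrow> real) \<Rightarrow> (nat \<Rightarrow> real \<Rightarrow> real) \<Rightarrow>
    ((nat \<Rightarrow> real) \<Rightarrow> nat \<Rightarrow> real) \<Rightarrow> ((nat \<Rightarrow> real) \<Rightarrow> nat \<Rightarrow> real) \<Rightarrow> bool" where
  "implements n vbar f A P \<longleftrightarrow>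
     (\<forall>i<n. \<forall>vi\<in>{0..vbar i}. \<forall>vi'\<in>{0..vbar i}.
        interim n vbar f i (\<lambda>v. v i * A v i - P v i) vi \<ge>
        interim n vbar f i (\<lambda>v. v i * A (v(i := vi')) i - P (v(i := vi')) i) vi) \<and>
     (\<forall>i<n. \<forall>vi\<in>{0..vbar i}. interim n vbar f i (\<lambda>v. P v i) vi = interim_payment n vbar f A i vi)"

definition expost_IR :: "nat \<Rightarrow> (nat \<Rightarrow> real) \<Rightarrow>
    ((nat \<Rightarrow> real) \<Rightarrow> nat \<Rightarrow> real) \<Rightarrow> ((nat \<Rightarrow> real) \<Rightarrow> nat \<Rightarrow> real) \<Rightarrow> bool" where
  "expost_IR n vbar A P \<longleftrightarrow> (\<forall>v\<in>types n vbar. \<forall>i<n. 0 \<le> v i * A v i - P v i)"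

definition wpb_bid :: "nat \<Rightarrow> (nat \<Rightarrow> real) \<Rightarrow> (nat \<Rightarrow> real \<Rightarrow> real) \<Rightarrow>
    ((nat \<Rightarrow> real) \<Rightarrow> nat \<Rightarrow> real) \<Rightarrow> nat \<Rightarrow> real \<Rightarrow> real" where
  "wpb_bid n vbar f A i vi =
     (if interim_alloc n vbar f A i vi > 0
      then interim_payment n vbar f A i vi / interim_alloc n vbar f A i vi else 0)"

definition wpb :: "nat \<Rightarrow> (nat \<Rightarrow> real) \<Rightarrow> (nat \<Rightarrow> real \<Rightarrow> real) \<Rightarrow>
    ((nat \<Rightarrow> real) \<Rightarrow> nat \<Rightarrow> real) \<Rightarrow> (nat \<Rightarrow> real) \<Rightarrow> nat \<Rightarrow> real" where
  "wpb n vbar f A v i = wpb_bid n vbar f A i (v i) * A v i"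

definition revenue_variance :: "nat \<Rightarrow> (nat \<Rightarrow> real) \<Rightarrow> (nat \<Rightarrow> real \<Rightarrow> real) \<Rightarrow>
    ((nat \<Rightarrow> real) \<Rightarrow> nat \<Rightarrow> real) \<Rightarrow> real" where
  "revenue_variance n vbar f P =
     (let R = (\<lambda>v. \<Sum>i<n. P v i);
          ER = (\<integral> v. R v \<partial>profile_measure n vbar f)
      in \<integral> v. (R v - ER)\<^sup>2 \<partial>profile_measure n vbar f)"

end

theory Submission
  imports Defs
begin

text \<open>With a single item at most one bidder wins, and ex-post individual rationality makes
  every loser pay nothing, so the revenue is the payment of the winner and
  \<open>R\<^sup>2 = \<Sum>\<^sub>i P\<^sub>i\<^sup>2\<close>. Revenue equivalence fixes \<open>E[R] = \<Sum>\<^sub>i E[z\<^sub>i(v\<^sub>i)]\<close>, so the variance is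
  minimised by minimising every \<open>E[P\<^sub>i\<^sup>2]\<close>. Conditionally on \<open>v\<^sub>i\<close>, the payment \<open>P\<^sub>i\<close> is
  supported on the event \<open>A\<^sub>i = 1\<close> of probability \<open>x\<^sub>i(v\<^sub>i)\<close> and has mean \<open>z\<^sub>i(v\<^sub>i)\<close>, so by
  Cauchy-Schwarz its second moment is at least \<open>z\<^sub>i(v\<^sub>i)\<^sup>2 / x\<^sub>i(v\<^sub>i)\<close>, which is exactly what
  the deterministic winner's bid \<open>b\<^sub>i(v\<^sub>i) = z\<^sub>i(v\<^sub>i) / x\<^sub>i(v\<^sub>i)\<close> achieves. That this bid
  implements \<open>A\<close> is the convexity of the interim utility \<open>\<integral>\<^sub>0\<^sup>v x\<^sub>i\<close>.\<close>

lemma integrable_on_bounded_borel: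
  fixes x :: "real \<Rightarrow> real"
  assumes "x \<in> borel_measurable borel" and "\<And>t. \<bar>x t\<bar> \<le> B"
  shows "x integrable_on {a..b}"
proof (rule measurable_bounded_by_integrable_imp_integrable_real[where g="\<lambda>_. B"])
  show "x \<in> borel_measurable (lebesgue_on {a..b})"
    using assms(1) by (simp add: measurable_completion measurable_restrict_space1)
qed (use assms(2) in auto)

lemma mono_integral_upto:
  fixes x :: "real \<Rightarrow> real"
  assumes int: "\<And>s t. x integrable_on {s..t}" and nonneg: "\<And>t. 0 \<le> x t"
  shows "mono (\<lambda>t. integral {a..t} x)"
proof (rule monoI)
  fix s t :: real assume "s \<le> t"
  show "integral {a..s} x \<le> integral {a..t} x"
  proof (cases "s < a")
    case True
    then show ?thesis using int nonneg by (simp add: integral_nonneg)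
  next
    case False
    then show ?thesis
      using \<open>s \<le> t\<close> int nonneg by (intro integral_subset_le) auto
  qed
qed

lemma integral_upto_above_tangent:
  fixes x :: "real \<Rightarrow> real"
  assumes mono: "mono_on {a..b} x" and s: "s \<in> {a..b}" and t: "t \<in> {a..b}"
  shows "integral {a..s} x + (t - s) * x s \<le> integral {a..t} x"
proof -
  have int: "x integrable_on {c..d}" if "a \<le> c" "d \<le> b" for c d
    using integrable_on_subinterval[OF integrable_on_mono_on[OF mono]] that by auto
  show ?thesis
  proof (cases "s \<le> t")
    case True
    have "(t - s) * x s = integral {s..t} (\<lambda>_. x s)" using True by simp
    also have "\<dots> \<le> integral {s..t} x"
      using True s t int by (intro integral_le) (auto intro: mono_onD[OF mono])
    also have "\<dots> = integral {a..t} x - integral {a..s} x"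
      using Henstock_Kurzweil_Integration.integral_combine[of a s t x] True s t int by auto
    finally show ?thesis by simp
  next
    case False
    have "integral {a..s} x - integral {a..t} x = integral {t..s} x"
      using Henstock_Kurzweil_Integration.integral_combine[of a t s x] False s t int by auto
    also have "\<dots> \<le> integral {t..s} (\<lambda>_. x s)"
      using False s t int by (intro integral_le) (auto intro: mono_onD[OF mono])
    also have "\<dots> = (s - t) * x s" using False by simp
    finally show ?thesis by (simp add: algebra_simps)
  qed
qed

lemma (in prob_space) second_moment_ge_on_event:
  fixes h a :: "'a \<Rightarrow> real"
  assumes h: "integrable M h" and h2: "integrable M (\<lambda>w. (h w)\<^sup>2)"
    and a: "a \<in> borel_measurable M" "\<And>w. a w \<in> {0, 1}"
    and supp: "AE w in M. h w * a w = h w"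
    and c: "c * expectation a = expectation h"
  shows "c\<^sup>2 * expectation a \<le> expectation (\<lambda>w. (h w)\<^sup>2)"
proof -
  have "\<bar>a w\<bar> \<le> 1" for w
    using a(2)[of w] by auto
  then have ia: "integrable M a"
    using a(1) by (intro integrable_const_bound[where B=1]) auto
  have iha: "integrable M (\<lambda>w. h w * a w)"
    by (rule integrable_cong_AE[THEN iffD2, OF _ _ supp h]) (use h a in auto)
  have Eha: "expectation (\<lambda>w. h w * a w) = expectation h"
    by (rule integral_cong_AE) (use h a supp in auto)
  have "(\<integral>w. (h w - c * a w)\<^sup>2 \<partial>M) = (\<integral>w. ((h w)\<^sup>2 - (2 * c) * (h w * a w)) + c\<^sup>2 * a w \<partial>M)"
    using a(2) by (intro Bochner_Integration.integral_cong)
      (auto simp: power2_eq_square algebra_simps)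
  also have "\<dots> = expectation (\<lambda>w. (h w)\<^sup>2) - 2 * c * expectation (\<lambda>w. h w * a w)
      + c\<^sup>2 * expectation a"
    using h2 iha ia by simp
  also have "\<dots> = expectation (\<lambda>w. (h w)\<^sup>2) - c\<^sup>2 * expectation a"
    unfolding Eha c[symmetric] by (simp add: power2_eq_square)
  finally have "(\<integral>w. (h w - c * a w)\<^sup>2 \<partial>M) = expectation (\<lambda>w. (h w)\<^sup>2) - c\<^sup>2 * expectation a" .
  moreover have "0 \<le> (\<integral>w. (h w - c * a w)\<^sup>2 \<partial>M)" by simp
  ultimately show ?thesis by simp
qed

locale bidder_priors =
  fixes n :: nat and vbar :: "nat \<Rightarrow> real" and f :: "nat \<Rightarrow> real \<Rightarrow> real"
  assumes valid_prior: "valid_prior n vbar f"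
begin

abbreviation "PM \<equiv> profile_measure n vbar f"
abbreviation "others i \<equiv> PiM ({..<n} - {i}) (prior vbar f)"

lemma space_prior [simp]: "space (prior vbar f i) = UNIV"
  by (simp add: prior_def)

lemma sets_prior [simp, measurable_cong]: "sets (prior vbar f i) = sets borel"
  by (simp add: prior_def)

lemma measurable_prior_density: "i < n \<Longrightarrow> f i \<in> borel_measurable borel"
  using valid_prior by (simp add: valid_prior_def)

lemma prob_space_prior: "i < n \<Longrightarrow> prob_space (prior vbar f i)"
proof (intro prob_spaceI)
  assume i: "i < n"
  have "emeasure (prior vbar f i) UNIV = (\<integral>\<^sup>+ x. ennreal (indicator {0..vbar i} x * f i x) \<partial>lborel)"
    unfolding prior_def using measurable_prior_density[OF i] by (subst emeasure_density) auto
  also have "\<dots> = 1" using valid_prior i by (simp add: valid_prior_def)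
  finally show "emeasure (prior vbar f i) (space (prior vbar f i)) = 1" by simp
qed

lemma AE_prior_range: "i < n \<Longrightarrow> AE y in prior vbar f i. y \<in> {0..vbar i}"
  unfolding prior_def using measurable_prior_density
  by (subst AE_density) (auto simp: indicator_def)

text \<open>The priors padded with a point mass at the indices \<open>i \<ge> n\<close>, so that the
  product-measure theory of \<^locale>\<open>product_prob_space\<close> applies.\<close>

definition padded_prior :: "nat \<Rightarrow> real measure" where
  "padded_prior i = (if i < n then prior vbar f i else return borel 0)"

lemma product_prob_space_padded_prior: "product_prob_space padded_prior"
proof -
  have "prob_space (padded_prior i)" for i
    by (auto simp: padded_prior_def prob_space_prior intro: prob_space_return)
  then show ?thesis
    unfolding product_prob_space_def product_prob_space_axioms_def product_sigma_finite_def
    by (auto intro: prob_space_imp_sigma_finite)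
qed

lemma PiM_padded_prior: "J \<subseteq> {..<n} \<Longrightarrow> PiM J (prior vbar f) = PiM J padded_prior"
  by (rule PiM_cong) (auto simp: padded_prior_def)

lemma AE_PiM_prior_range:
  assumes J: "J \<subseteq> {..<n}"
  shows "AE w in PiM J (prior vbar f). \<forall>j\<in>J. w j \<in> {0..vbar j}"
proof -
  interpret product_prob_space padded_prior J by (rule product_prob_space_padded_prior)
  show ?thesis unfolding PiM_padded_prior[OF J]
  proof (rule AE_finite_allI)
    fix j assume j: "j \<in> J"
    then have "padded_prior j = prior vbar f j" using J by (auto simp: padded_prior_def)
    then have "AE y in padded_prior j. y \<in> {0..vbar j}"
      using J j AE_prior_range[of j] by (simp only:) auto
    then show "AE w in PiM J padded_prior. w j \<in> {0..vbar j}" by (rule AE_component[OF j])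
  qed (use J finite_subset in blast)
qed

lemma prob_space_profile: "prob_space PM"
  unfolding profile_measure_def by (rule prob_space_PiM) (auto intro: prob_space_prior)

lemma prob_space_others: "prob_space (others i)"
  by (rule prob_space_PiM) (auto intro: prob_space_prior)

lemma measurable_component_profile: "i < n \<Longrightarrow> (\<lambda>v. v i) \<in> borel_measurable PM"
  unfolding profile_measure_def
  using measurable_component_singleton[of i "{..<n}" "prior vbar f"]
  by (simp cong: measurable_cong_sets)

lemma measurable_upd_others:
  assumes i: "i < n" and g: "g \<in> borel_measurable PM"
  shows "(\<lambda>w. g (w(i := y))) \<in> borel_measurable (others i)"
proof -
  have "(\<lambda>w. w(i := y)) \<in> measurable (others i) PM"
    unfolding profile_measure_def by (rule measurable_fun_upd[where J="{..<n}-{i}"]) (use i in auto)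
  then show ?thesis using measurable_comp[OF _ g] by (simp add: comp_def)
qed

lemma AE_others_upd_types:
  assumes i: "i < n" and y: "y \<in> {0..vbar i}"
  shows "AE w in others i. w(i := y) \<in> types n vbar"
proof -
  have "AE w in others i. \<forall>j\<in>{..<n} - {i}. w j \<in> {0..vbar j}"
    by (rule AE_PiM_prior_range) auto
  with AE_space show ?thesis
  proof eventually_elim
    case (elim w)
    then show ?case using i y
      by (auto simp: types_def space_PiM PiE_iff extensional_def)
  qed
qed

lemma AE_profile_types: "AE v in PM. v \<in> types n vbar"
proof -
  have "AE v in PM. \<forall>j\<in>{..<n}. v j \<in> {0..vbar j}"
    unfolding profile_measure_def by (rule AE_PiM_prior_range) auto
  with AE_space show ?thesis
  proof eventually_elim
    case (elim v)
    then show ?case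
      by (auto simp: types_def space_PiM PiE_iff extensional_def profile_measure_def)
  qed
qed

context
  fixes g :: "(nat \<Rightarrow> real) \<Rightarrow> real" and B :: real
  assumes g_measurable: "g \<in> borel_measurable PM"
    and g_bounds: "\<And>v. v \<in> types n vbar \<Longrightarrow> 0 \<le> g v \<and> g v \<le> B"
begin

lemma interim_bounds:
  assumes i: "i < n" and y: "y \<in> {0..vbar i}"
  shows "integrable (others i) (\<lambda>w. g (w(i := y)))"
    and "0 \<le> interim n vbar f i g y" and "interim n vbar f i g y \<le> B"
proof -
  interpret O: prob_space "others i" by (rule prob_space_others)
  have ae: "AE w in others i. 0 \<le> g (w(i := y)) \<and> g (w(i := y)) \<le> B"
    using AE_others_upd_types[OF i y] by eventually_elim (rule g_bounds)
  show int: "integrable (others i) (\<lambda>w. g (w(i := y)))"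
    using ae measurable_upd_others[OF i g_measurable]
    by (intro O.integrable_const_bound[where B=B]) auto
  show "0 \<le> interim n vbar f i g y" unfolding interim_def
    by (rule integral_nonneg_AE) (use ae in auto)
  have "interim n vbar f i g y \<le> (\<integral>w. B \<partial>others i)" unfolding interim_def
    by (rule integral_mono_AE) (use ae int in auto)
  then show "interim n vbar f i g y \<le> B" by (simp add: O.prob_space)
qed

lemma measurable_interim:
  assumes i: "i < n"
  shows "interim n vbar f i g \<in> borel_measurable (prior vbar f i)"
proof -
  interpret O: prob_space "others i" by (rule prob_space_others)
  have "(\<lambda>p. (snd p)(i := fst p)) \<in> measurable (borel \<Otimes>\<^sub>M others i) PM"
    unfolding profile_measure_def
    by (rule measurable_fun_upd[where J="{..<n}-{i}"]) (use i in auto)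
  from measurable_comp[OF this g_measurable]
  have "case_prod (\<lambda>y w. g (w(i := y))) \<in> borel_measurable (borel \<Otimes>\<^sub>M others i)"
    by (simp add: comp_def case_prod_beta')
  then show ?thesis unfolding interim_def
    by (simp cong: measurable_cong_sets add: O.borel_measurable_lebesgue_integral)
qed

lemma integrable_interim: "i < n \<Longrightarrow> integrable (prior vbar f i) (interim n vbar f i g)"
proof -
  assume i: "i < n"
  interpret P: prob_space "prior vbar f i" by (rule prob_space_prior[OF i])
  have "AE y in prior vbar f i. norm (interim n vbar f i g y) \<le> B"
    using AE_prior_range[OF i] by eventually_elim (use interim_bounds(2,3)[OF i] in auto)
  then show ?thesis by (rule P.integrable_const_bound[OF _ measurable_interim[OF i]])
qed

lemma integral_profile_eq_interim:
  assumes i: "i < n"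
  shows "integral\<^sup>L PM g = (\<integral>y. interim n vbar f i g y \<partial>prior vbar f i)"
proof -
  interpret P: product_prob_space padded_prior "{..<n}" by (rule product_prob_space_padded_prior)
  have "insert i ({..<n} - {i}) = {..<n}" using i by auto
  then have PM_eq: "PM = PiM (insert i ({..<n} - {i})) padded_prior"
    unfolding profile_measure_def by (metis PiM_padded_prior order_refl)
  have others_eq: "others i = PiM ({..<n} - {i}) padded_prior" by (rule PiM_padded_prior) auto
  have padded_i: "padded_prior i = prior vbar f i" using i by (simp add: padded_prior_def)
  have "integral\<^sup>L PM g = enn2real (\<integral>\<^sup>+ v. ennreal (g v) \<partial>PM)"
    using AE_profile_types g_bounds g_measurable
    by (intro integral_eq_nn_integral) auto
  also have "(\<integral>\<^sup>+ v. ennreal (g v) \<partial>PM) =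
      (\<integral>\<^sup>+ y. (\<integral>\<^sup>+ w. ennreal (g (w(i := y))) \<partial>others i) \<partial>prior vbar f i)"
    unfolding PM_eq others_eq padded_i[symmetric]
    by (rule P.product_nn_integral_insert_rev) (use g_measurable PM_eq in auto)
  also have "\<dots> = (\<integral>\<^sup>+ y. ennreal (interim n vbar f i g y) \<partial>prior vbar f i)"
  proof (rule nn_integral_cong_AE)
    show "AE y in prior vbar f i.
        (\<integral>\<^sup>+ w. ennreal (g (w(i := y))) \<partial>others i) = ennreal (interim n vbar f i g y)"
      using AE_prior_range[OF i]
    proof eventually_elim
      case (elim y)
      have "AE w in others i. 0 \<le> g (w(i := y))"
        using AE_others_upd_types[OF i elim] by eventually_elim (use g_bounds in auto)
      then show ?case unfolding interim_def
        using nn_integral_eq_integral[OF interim_bounds(1)[OF i elim]] by simp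
    qed
  qed
  also have "enn2real \<dots> = (\<integral>y. interim n vbar f i g y \<partial>prior vbar f i)"
    using AE_prior_range[OF i] interim_bounds(2)[OF i] measurable_interim[OF i]
    by (intro integral_eq_nn_integral[symmetric]) auto
  finally show ?thesis .
qed

end

end

locale single_item_auction = bidder_priors +
  fixes A :: "(nat \<Rightarrow> real) \<Rightarrow> nat \<Rightarrow> real"
  assumes alloc_rule: "alloc_rule n 1 vbar f A"
    and implementable: "implementable n vbar f A"
begin

lemma measurable_alloc: "i < n \<Longrightarrow> (\<lambda>v. A v i) \<in> borel_measurable PM"
  using alloc_rule by (simp add: alloc_rule_def)

lemma alloc_01: "i < n \<Longrightarrow> A v i = 0 \<or> A v i = 1"
  using alloc_rule by (simp add: alloc_rule_def)

lemma alloc_single_winner: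
  assumes j: "j < n" and k: "k < n" "k \<noteq> j" and win: "A v j = 1"
  shows "A v k = 0"
proof -
  have "(\<Sum>i\<in>{j, k}. A v i) \<le> (\<Sum>i<n. A v i)"
  proof (rule sum_mono2)
    show "0 \<le> A v l" if "l \<in> {..<n} - {j, k}" for l
      using alloc_01[of l v] that by auto
  qed (use j k in auto)
  also have "\<dots> \<le> 1" using alloc_rule by (simp add: alloc_rule_def)
  finally show ?thesis using k win alloc_01[OF k(1), of v] by auto
qed

lemma interim_alloc_bounds:
  assumes i: "i < n"
  shows "0 \<le> interim_alloc n vbar f A i t \<and> interim_alloc n vbar f A i t \<le> 1"
proof -
  interpret O: prob_space "others i" by (rule prob_space_others)
  have bounds: "0 \<le> A (w(i := t)) i \<and> A (w(i := t)) i \<le> 1" for w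
    using alloc_01[OF i, of "w(i := t)"] by auto
  have "integrable (others i) (\<lambda>w. A (w(i := t)) i)"
    using bounds measurable_upd_others[OF i measurable_alloc[OF i]]
    by (intro O.integrable_const_bound[where B=1]) auto
  then have "(\<integral>w. A (w(i := t)) i \<partial>others i) \<le> (\<integral>w. 1 \<partial>others i)"
    using bounds by (intro integral_mono) auto
  moreover have "0 \<le> (\<integral>w. A (w(i := t)) i \<partial>others i)"
    using bounds by (intro integral_nonneg_AE) auto
  ultimately show ?thesis by (simp add: interim_alloc_def interim_def O.prob_space)
qed

lemma measurable_interim_alloc:
  assumes i: "i < n"
  shows "interim_alloc n vbar f A i \<in> borel_measurable borel"
proof -
  have "0 \<le> A v i \<and> A v i \<le> 1" for v
    using alloc_01[OF i, of v] by auto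
  then show ?thesis
    using measurable_interim[OF measurable_alloc[OF i], of 1, OF _ i]
    unfolding interim_alloc_def by (simp cong: measurable_cong_sets)
qed

lemma interim_alloc_integrable_on:
  "i < n \<Longrightarrow> interim_alloc n vbar f A i integrable_on {s..t}"
  using interim_alloc_bounds
  by (intro integrable_on_bounded_borel[OF measurable_interim_alloc, where B=1]) auto

lemma mono_on_interim_alloc: "i < n \<Longrightarrow> mono_on {0..vbar i} (interim_alloc n vbar f A i)"
  using implementable by (simp add: implementable_def)

lemma interim_payment_nonneg:
  assumes i: "i < n" and y: "y \<in> {0..vbar i}"
  shows "0 \<le> interim_payment n vbar f A i y"
  using integral_upto_above_tangent[OF mono_on_interim_alloc[OF i] y, of 0] y
  by (simp add: interim_payment_def)

lemma measurable_interim_payment: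
  assumes i: "i < n"
  shows "interim_payment n vbar f A i \<in> borel_measurable borel"
proof -
  note [measurable] = measurable_interim_alloc[OF i]
  have [measurable]: "(\<lambda>t. integral {0..t} (interim_alloc n vbar f A i)) \<in> borel_measurable borel"
    using interim_alloc_integrable_on[OF i] interim_alloc_bounds[OF i]
    by (intro borel_measurable_mono mono_integral_upto) auto
  show ?thesis unfolding interim_payment_def[abs_def] by measurable
qed

lemma wpb_bid_mult_interim_alloc:
  assumes i: "i < n" and y: "y \<in> {0..vbar i}"
  shows "wpb_bid n vbar f A i y * interim_alloc n vbar f A i y = interim_payment n vbar f A i y"
proof (cases "interim_alloc n vbar f A i y > 0")
  case False
  then have "interim_alloc n vbar f A i y = 0" using interim_alloc_bounds[OF i, of y] by linarith
  moreover have "0 \<le> integral {0..y} (interim_alloc n vbar f A i)"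
    using interim_alloc_integrable_on[OF i] interim_alloc_bounds[OF i] by (simp add: integral_nonneg)
  ultimately show ?thesis using interim_payment_nonneg[OF i y]
    by (simp add: wpb_bid_def interim_payment_def)
qed (simp add: wpb_bid_def)

lemma wpb_bid_bounds:
  assumes i: "i < n" and y: "y \<in> {0..vbar i}"
  shows "0 \<le> wpb_bid n vbar f A i y \<and> wpb_bid n vbar f A i y \<le> y"
proof (cases "interim_alloc n vbar f A i y > 0")
  case True
  have "0 \<le> integral {0..y} (interim_alloc n vbar f A i)"
    using interim_alloc_integrable_on[OF i] interim_alloc_bounds[OF i] by (simp add: integral_nonneg)
  then show ?thesis using True interim_payment_nonneg[OF i y]
    by (simp add: wpb_bid_def divide_le_eq, simp add: interim_payment_def)
qed (use y in \<open>simp add: wpb_bid_def\<close>)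

lemma measurable_wpb:
  assumes i: "i < n"
  shows "(\<lambda>v. wpb n vbar f A v i) \<in> borel_measurable PM"
proof -
  note [measurable] = measurable_interim_alloc[OF i] measurable_interim_payment[OF i]
    measurable_component_profile[OF i] measurable_alloc[OF i]
  show ?thesis unfolding wpb_def wpb_bid_def by measurable
qed

lemma wpb_bounds:
  assumes "v \<in> types n vbar" and i: "i < n"
  shows "0 \<le> wpb n vbar f A v i \<and> wpb n vbar f A v i \<le> v i * A v i"
proof -
  have "v i \<in> {0..vbar i}" using assms by (auto simp: types_def PiE_iff)
  then show ?thesis
    using wpb_bid_bounds[OF i] alloc_01[OF i, of v] by (auto simp: wpb_def)
qed

lemma interim_wpb:
  "interim n vbar f i (\<lambda>v. wpb n vbar f A v i) y =
     wpb_bid n vbar f A i y * interim_alloc n vbar f A i y"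
  by (simp add: interim_def interim_alloc_def wpb_def)

lemma interim_bid_utility:
  "interim n vbar f i (\<lambda>v. y * A (v(i := y')) i - wpb n vbar f A (v(i := y')) i) y =
     (y - wpb_bid n vbar f A i y') * interim_alloc n vbar f A i y'"
proof -
  have "interim n vbar f i (\<lambda>v. y * A (v(i := y')) i - wpb n vbar f A (v(i := y')) i) y =
      (\<integral>w. (y - wpb_bid n vbar f A i y') * A (w(i := y')) i \<partial>others i)"
    unfolding interim_def by (intro Bochner_Integration.integral_cong) (auto simp: wpb_def algebra_simps)
  then show ?thesis by (simp add: interim_alloc_def interim_def)
qed

text \<open>Under WPB the interim utility of truthful bidding is \<open>\<integral>\<^sub>0\<^sup>y x\<^sub>i\<close>, and the utility of
  bidding \<open>y'\<close> is the tangent of this convex function at \<open>y'\<close>.\<close>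

lemma wpb_incentive_compatible:
  assumes i: "i < n" and y: "y \<in> {0..vbar i}" and y': "y' \<in> {0..vbar i}"
  shows "interim n vbar f i (\<lambda>v. v i * A (v(i := y')) i - wpb n vbar f A (v(i := y')) i) y
      \<le> interim n vbar f i (\<lambda>v. v i * A v i - wpb n vbar f A v i) y"
proof -
  let ?U = "\<lambda>t. integral {0..t} (interim_alloc n vbar f A i)"
  have utility: "interim n vbar f i (\<lambda>v. v i * A (v(i := t)) i - wpb n vbar f A (v(i := t)) i) y
      = (y - t) * interim_alloc n vbar f A i t + ?U t" if "t \<in> {0..vbar i}" for t
  proof -
    have "interim n vbar f i (\<lambda>v. v i * A (v(i := t)) i - wpb n vbar f A (v(i := t)) i) y
        = interim n vbar f i (\<lambda>v. y * A (v(i := t)) i - wpb n vbar f A (v(i := t)) i) y"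
      unfolding interim_def by (intro Bochner_Integration.integral_cong) auto
    then show ?thesis
      using wpb_bid_mult_interim_alloc[OF i that]
      by (simp add: interim_bid_utility interim_payment_def algebra_simps)
  qed
  have "interim n vbar f i (\<lambda>v. v i * A v i - wpb n vbar f A v i) y =
      interim n vbar f i (\<lambda>v. v i * A (v(i := y)) i - wpb n vbar f A (v(i := y)) i) y"
    unfolding interim_def by (intro Bochner_Integration.integral_cong) auto
  then show ?thesis
    using utility[OF y] utility[OF y'] integral_upto_above_tangent[OF mono_on_interim_alloc[OF i] y' y]
    by (simp add: algebra_simps)
qed

lemma wpb_implements_IR:
  "payment_rule n vbar f (wpb n vbar f A) \<and> implements n vbar f A (wpb n vbar f A) \<and>
   expost_IR n vbar A (wpb n vbar f A)"
  using measurable_wpb wpb_bounds wpb_incentive_compatible wpb_bid_mult_interim_alloc interim_wpb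
  by (auto simp: payment_rule_def implements_def expost_IR_def)

text \<open>The properties of a payment rule implementing \<open>A\<close> ex post individually rationally
  that the variance comparison uses; incentive compatibility is not among them.\<close>

definition admissible_payment :: "((nat \<Rightarrow> real) \<Rightarrow> nat \<Rightarrow> real) \<Rightarrow> bool" where
  "admissible_payment P \<longleftrightarrow> (\<forall>i<n. (\<lambda>v. P v i) \<in> borel_measurable PM) \<and>
     (\<forall>v\<in>types n vbar. \<forall>i<n. 0 \<le> P v i \<and> P v i \<le> v i * A v i) \<and>
     (\<forall>i<n. \<forall>y\<in>{0..vbar i}. interim n vbar f i (\<lambda>v. P v i) y = interim_payment n vbar f A i y)"

lemma admissible_paymentI:
  "payment_rule n vbar f P \<Longrightarrow> implements n vbar f A P \<Longrightarrow> expost_IR n vbar A P \<Longrightarrow>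
    admissible_payment P"
  by (auto simp: admissible_payment_def payment_rule_def implements_def expost_IR_def)

lemma admissible_wpb: "admissible_payment (wpb n vbar f A)"
  using wpb_implements_IR by (blast intro: admissible_paymentI)

context
  fixes P :: "(nat \<Rightarrow> real) \<Rightarrow> nat \<Rightarrow> real"
  assumes admissible: "admissible_payment P"
begin

lemma measurable_payment: "i < n \<Longrightarrow> (\<lambda>v. P v i) \<in> borel_measurable PM"
  using admissible by (simp add: admissible_payment_def)

lemma measurable_payment_square:
  "i < n \<Longrightarrow> (\<lambda>v. (P v i)\<^sup>2) \<in> borel_measurable PM"
  using measurable_payment by measurable

lemma interim_payment_eq:
  "i < n \<Longrightarrow> y \<in> {0..vbar i} \<Longrightarrow> interim n vbar f i (\<lambda>v. P v i) y = interim_payment n vbar f A i y"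
  using admissible by (simp add: admissible_payment_def)

lemma payment_le_alloc:
  "v \<in> types n vbar \<Longrightarrow> i < n \<Longrightarrow> 0 \<le> P v i \<and> P v i \<le> v i * A v i"
  using admissible by (simp add: admissible_payment_def)

lemma loser_pays_nothing: "v \<in> types n vbar \<Longrightarrow> i < n \<Longrightarrow> A v i = 0 \<Longrightarrow> P v i = 0"
  using payment_le_alloc[of v i] by simp

lemma payment_bounds:
  assumes v: "v \<in> types n vbar" and i: "i < n"
  shows "0 \<le> P v i \<and> P v i \<le> vbar i"
proof -
  have "v i \<in> {0..vbar i}" using v i by (auto simp: types_def PiE_iff)
  then show ?thesis using payment_le_alloc[OF v i] alloc_01[OF i, of v] by auto
qed

lemma payment_square_bounds:
  "v \<in> types n vbar \<Longrightarrow> i < n \<Longrightarrow> 0 \<le> (P v i)\<^sup>2 \<and> (P v i)\<^sup>2 \<le> (vbar i)\<^sup>2"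
  using payment_bounds by (auto intro: power_mono)

lemma revenue_square_eq_sum_squares:
  assumes v: "v \<in> types n vbar"
  shows "(\<Sum>i<n. P v i)\<^sup>2 = (\<Sum>i<n. (P v i)\<^sup>2)"
proof (cases "\<exists>j<n. A v j = 1")
  case True
  then obtain j where j: "j < n" "A v j = 1" by auto
  have losers: "\<forall>k\<in>{..<n} - {j}. P v k = 0"
    using alloc_single_winner[OF j(1) _ _ j(2)] loser_pays_nothing[OF v] by auto
  have "(\<Sum>i<n. h (P v i)) = (\<Sum>i\<in>{j}. h (P v i))" if "h 0 = 0" for h :: "real \<Rightarrow> real"
    by (rule sum.mono_neutral_right) (use j(1) losers that in auto)
  from this[of id] this[of "\<lambda>p. p\<^sup>2"] show ?thesis by simp
next
  case False
  then have "P v i = 0" if "i < n" for i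
    using that alloc_01[OF that, of v] loser_pays_nothing[OF v that] by auto
  then show ?thesis by simp
qed

lemma integrable_payment: "i < n \<Longrightarrow> integrable PM (\<lambda>v. P v i)"
proof -
  assume i: "i < n"
  interpret prob_space PM by (rule prob_space_profile)
  show ?thesis
    using AE_profile_types payment_bounds[OF _ i] measurable_payment[OF i]
    by (intro integrable_const_bound[where B="vbar i"]) auto
qed

lemma integrable_payment_square: "i < n \<Longrightarrow> integrable PM (\<lambda>v. (P v i)\<^sup>2)"
proof -
  assume i: "i < n"
  interpret prob_space PM by (rule prob_space_profile)
  show ?thesis
    using AE_profile_types payment_square_bounds[OF _ i] measurable_payment_square[OF i]
    by (intro integrable_const_bound[where B="(vbar i)\<^sup>2"]) auto
qed

lemma integral_revenue:
  "integral\<^sup>L PM (\<lambda>v. \<Sum>i<n. P v i) = (\<Sum>i<n. \<integral>y. interim_payment n vbar f A i y \<partial>prior vbar f i)"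
proof -
  have "integral\<^sup>L PM (\<lambda>v. P v i) = (\<integral>y. interim_payment n vbar f A i y \<partial>prior vbar f i)"
    if i: "i < n" for i
  proof -
    have "integral\<^sup>L PM (\<lambda>v. P v i) = (\<integral>y. interim n vbar f i (\<lambda>v. P v i) y \<partial>prior vbar f i)"
      by (rule integral_profile_eq_interim[OF measurable_payment[OF i] payment_bounds[OF _ i] i])
    also have "\<dots> = (\<integral>y. interim_payment n vbar f A i y \<partial>prior vbar f i)"
      using AE_prior_range[OF i] interim_payment_eq[OF i]
        measurable_interim[OF measurable_payment[OF i] payment_bounds[OF _ i] i]
        measurable_interim_payment[OF i]
      by (intro integral_cong_AE) (auto cong: measurable_cong_sets)
    finally show ?thesis .
  qed
  then show ?thesis using integrable_payment by simp
qed

lemma integral_revenue_square: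
  "integral\<^sup>L PM (\<lambda>v. (\<Sum>i<n. P v i)\<^sup>2) = (\<Sum>i<n. integral\<^sup>L PM (\<lambda>v. (P v i)\<^sup>2))"
proof -
  have "integral\<^sup>L PM (\<lambda>v. (\<Sum>i<n. P v i)\<^sup>2) = integral\<^sup>L PM (\<lambda>v. \<Sum>i<n. (P v i)\<^sup>2)"
    using AE_profile_types revenue_square_eq_sum_squares measurable_payment
    by (intro integral_cong_AE) auto
  then show ?thesis using integrable_payment_square by simp
qed

lemma revenue_variance_eq:
  "revenue_variance n vbar f P = (\<Sum>i<n. integral\<^sup>L PM (\<lambda>v. (P v i)\<^sup>2)) -
     (\<Sum>i<n. \<integral>y. interim_payment n vbar f A i y \<partial>prior vbar f i)\<^sup>2"
proof -
  interpret prob_space PM by (rule prob_space_profile)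
  have R: "integrable PM (\<lambda>v. \<Sum>i<n. P v i)"
    using integrable_payment by (intro Bochner_Integration.integrable_sum[where f="\<lambda>i v. P v i"]) auto
  have R2: "integrable PM (\<lambda>v. (\<Sum>i<n. P v i)\<^sup>2)"
    using AE_profile_types revenue_square_eq_sum_squares integrable_payment_square measurable_payment
    by (subst integrable_cong_AE[where g="\<lambda>v. \<Sum>i<n. (P v i)\<^sup>2"]) auto
  show ?thesis
    unfolding revenue_variance_def Let_def
    using variance_eq[OF R R2] integral_revenue integral_revenue_square by simp
qed

lemma interim_wpb_square_le:
  assumes i: "i < n" and y: "y \<in> {0..vbar i}"
  shows "interim n vbar f i (\<lambda>v. (wpb n vbar f A v i)\<^sup>2) y \<le> interim n vbar f i (\<lambda>v. (P v i)\<^sup>2) y"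
proof -
  interpret O: prob_space "others i" by (rule prob_space_others)
  let ?h = "\<lambda>w. P (w(i := y)) i" and ?a = "\<lambda>w. A (w(i := y)) i"
  let ?b = "wpb_bid n vbar f A i y"
  have "interim n vbar f i (\<lambda>v. (wpb n vbar f A v i)\<^sup>2) y = (\<integral>w. ?b\<^sup>2 * ?a w \<partial>others i)"
    unfolding interim_def using alloc_01[OF i]
    by (intro Bochner_Integration.integral_cong) (auto simp: wpb_def power2_eq_square)
  also have "\<dots> = ?b\<^sup>2 * O.expectation ?a" by simp
  also have "\<dots> \<le> O.expectation (\<lambda>w. (?h w)\<^sup>2)"
  proof (rule O.second_moment_ge_on_event)
    show "integrable (others i) ?h"
      by (rule interim_bounds(1)[OF measurable_payment[OF i] payment_bounds[OF _ i] i y])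
    show "integrable (others i) (\<lambda>w. (?h w)\<^sup>2)"
      by (rule interim_bounds(1)[OF measurable_payment_square[OF i] payment_square_bounds[OF _ i] i y])
    show "?a \<in> borel_measurable (others i)"
      by (rule measurable_upd_others[OF i measurable_alloc[OF i]])
    show "?a w \<in> {0, 1}" for w
      using alloc_01[OF i] by auto
    show "AE w in others i. ?h w * ?a w = ?h w"
      using AE_others_upd_types[OF i y]
      by eventually_elim (use alloc_01[OF i] loser_pays_nothing[OF _ i] in force)
    show "?b * O.expectation ?a = O.expectation ?h"
      using wpb_bid_mult_interim_alloc[OF i y] interim_payment_eq[OF i y]
      by (simp add: interim_alloc_def interim_def)
  qed
  also have "\<dots> = interim n vbar f i (\<lambda>v. (P v i)\<^sup>2) y"
    by (simp add: interim_def)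
  finally show ?thesis .
qed

end

lemma second_moment_wpb_le:
  assumes P: "admissible_payment P" and i: "i < n"
  shows "integral\<^sup>L PM (\<lambda>v. (wpb n vbar f A v i)\<^sup>2) \<le> integral\<^sup>L PM (\<lambda>v. (P v i)\<^sup>2)"
proof -
  note wpb = admissible_wpb
  have "integral\<^sup>L PM (\<lambda>v. (wpb n vbar f A v i)\<^sup>2) =
      (\<integral>y. interim n vbar f i (\<lambda>v. (wpb n vbar f A v i)\<^sup>2) y \<partial>prior vbar f i)"
    by (rule integral_profile_eq_interim[OF measurable_payment_square[OF wpb i]
          payment_square_bounds[OF wpb _ i] i])
  also have "\<dots> \<le> (\<integral>y. interim n vbar f i (\<lambda>v. (P v i)\<^sup>2) y \<partial>prior vbar f i)"
    using AE_prior_range[OF i] interim_wpb_square_le[OF P i]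
      integrable_interim[OF measurable_payment_square[OF wpb i] payment_square_bounds[OF wpb _ i] i]
      integrable_interim[OF measurable_payment_square[OF P i] payment_square_bounds[OF P _ i] i]
    by (intro integral_mono_AE) auto
  also have "\<dots> = integral\<^sup>L PM (\<lambda>v. (P v i)\<^sup>2)"
    by (rule integral_profile_eq_interim[OF measurable_payment_square[OF P i]
          payment_square_bounds[OF P _ i] i, symmetric])
  finally show ?thesis .
qed

lemma revenue_variance_wpb_le:
  assumes "admissible_payment P"
  shows "revenue_variance n vbar f (wpb n vbar f A) \<le> revenue_variance n vbar f P"
  unfolding revenue_variance_eq[OF assms] revenue_variance_eq[OF admissible_wpb]
  using second_moment_wpb_le[OF assms] by (intro diff_right_mono sum_mono) simp

end

theorem mainTheorem3:
  fixes n :: nat and vbar :: "nat \<Rightarrow> real" and f :: "nat \<Rightarrow> real \<Rightarrow> real"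
    and A :: "(nat \<Rightarrow> real) \<Rightarrow> nat \<Rightarrow> real"
  assumes "1 < n"
    and "valid_prior n vbar f"
    and "alloc_rule n 1 vbar f A"
    and "implementable n vbar f A"
  shows "payment_rule n vbar f (wpb n vbar f A) \<and> implements n vbar f A (wpb n vbar f A) \<and>
         expost_IR n vbar A (wpb n vbar f A) \<and>
         (\<forall>P. payment_rule n vbar f P \<and> implements n vbar f A P \<and> expost_IR n vbar A P \<longrightarrow>
              revenue_variance n vbar f (wpb n vbar f A) \<le> revenue_variance n vbar f P)"
proof -
  interpret single_item_auction n vbar f A
    using assms(2-4) by (intro single_item_auction.intro bidder_priors.intro single_item_auction_axioms.intro)
  show ?thesis
    using wpb_implements_IR revenue_variance_wpb_le admissible_paymentI by blast
qed

end
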